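(* Let $V$ be a vector configuration of rank $r$ containing no copy of the zero vector, with $n=r+d+1$ elements and dual degree $\deg^*(V)=\delta$. Then \[\mathrm{DD}(V)=r-(d+1-2\delta),\qquad \operatorname{rank}(V)+\deg^*(V)=\mathrm{DD}(V)+\operatorname{codeg}^*(V),\qquad |V|=\mathrm{DD}(V)+2\operatorname{codeg}^*(V).\] Moreover, every oriented linear hyperplane $H$ with $|\overline{H}^-\cap V|=\operatorname{codeg}^*(V)$ satisfies $|H^+\cap V|=\mathrm{DD}(V)+\operatorname{codeg}^*(V)$.
   Context: A vector configuration is a finite family (repetitions allowed) $V$ of vectors in $\mathbb{R}^r$; $\operatorname{rank}(V)=\dim\operatorname{lin}(V)$, and cardinalities count multiplicities. For a nonzero linear functional $f$, the oriented linear hyperplane $H=\{f=0\}$ has $H^+=\{f>0\}$, $H^-=\{f<0\}$, $\overline{H}^-=\{f\le0\}$. Dual codegree: $\operatorname{codeg}^*(V)=\min_H|\overline{H}^-\cap V|$; dual degree: $\deg^*(V)=\max_H|H^+\cap V|-\operatorname{rank}(V)$, over oriented linear hyperplanes $H$. Covector discrepancy: $\mathrm{DD}(V)=\max_f\big|\,|\{v: f(v)>0\}|-|\{v:f(v)<0\}|\,\big|$ over all linear functionals $f$. *)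

theory Defs
  imports "HOL-Analysis.Analysis"
begin

text \<open>A vector configuration is a finite family (with repetitions) of vectors,
  represented as a list. Cardinalities count multiplicities.\<close>

definition vc_count :: "('a \<Rightarrow> bool) \<Rightarrow> 'a list \<Rightarrow> nat" where
  "vc_count P V = length (filter P V)"

definition vc_rank :: "(real^'n) list \<Rightarrow> nat" where
  "vc_rank V = dim (set V)"

text \<open>Oriented linear hyperplanes H = {f = 0} are given by nonzero linear functionals f.\<close>

definition nonzero_functional :: "(real^'n \<Rightarrow> real) \<Rightarrow> bool" where
  "nonzero_functional f \<longleftrightarrow> linear f \<and> f \<noteq> (\<lambda>_. 0)"

definition dual_codegree :: "(real^'n) list \<Rightarrow> nat" where
  "dual_codegree V = Min {vc_count (\<lambda>v. f v \<le> 0) V | f. nonzero_functional f}"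

definition dual_degree :: "(real^'n) list \<Rightarrow> int" where
  "dual_degree V = int (Max {vc_count (\<lambda>v. f v > 0) V | f. nonzero_functional f})
                    - int (vc_rank V)"

definition covector_discrepancy :: "(real^'n) list \<Rightarrow> int" where
  "covector_discrepancy V =
     Max {\<bar>int (vc_count (\<lambda>v. f v > 0) V) - int (vc_count (\<lambda>v. f v < 0) V)\<bar> | f :: real^'n \<Rightarrow> real. linear f}"

end

theory Submission
  imports Defs
begin

text \<open>Let \<open>P\<close> be the largest number of vectors of \<open>V\<close> in an open halfspace \<open>H\<^sup>+\<close>. The dual
  codegree is \<open>|V| - P\<close> and the dual degree is \<open>P - rank V\<close>, so everything follows from
  \<open>DD(V) = 2P - |V|\<close>. For a functional vanishing on no vector of \<open>V\<close> the discrepancy is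
  \<open>2|H\<^sup>+ \<inter> V| - |V|\<close>, hence at most \<open>2P - |V|\<close>. An arbitrary linear functional \<open>f\<close> is reduced
  to this case: for a functional \<open>g\<close> vanishing on no vector (it exists since \<open>0 \<notin> V\<close>) and
  small \<open>e > 0\<close>, the discrepancies of \<open>f + e g\<close> and \<open>f - e g\<close> average to that of \<open>f\<close>, and
  both vanish on no vector of \<open>V\<close>.\<close>

definition max_open_halfspace_count :: "(real^'n) list \<Rightarrow> nat" where
  "max_open_halfspace_count V = Max {vc_count (\<lambda>v. f v > 0) V | f. nonzero_functional f}"

definition signed_discrepancy :: "('a \<Rightarrow> real) \<Rightarrow> 'a list \<Rightarrow> int" where
  "signed_discrepancy f V = int (vc_count (\<lambda>v. f v > 0) V) - int (vc_count (\<lambda>v. f v < 0) V)"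

lemma vc_count_le_length: "vc_count P V \<le> length V"
  by (simp add: vc_count_def)

lemma vc_count_nonpos: "vc_count (\<lambda>v. f v \<le> (0::real)) V = length V - vc_count (\<lambda>v. f v > 0) V"
  unfolding vc_count_def using sum_length_filter_compl[of "\<lambda>v. f v > 0" V]
  by (simp add: not_less)

lemma vc_count_pos_plus_neg_le: "vc_count (\<lambda>v. f v > (0::real)) V + vc_count (\<lambda>v. f v < 0) V \<le> length V"
  by (induction V) (auto simp: vc_count_def)

lemma vc_count_pos_plus_neg_eq:
  "\<forall>v\<in>set V. f v \<noteq> (0::real) \<Longrightarrow> vc_count (\<lambda>v. f v > 0) V + vc_count (\<lambda>v. f v < 0) V = length V"
  by (induction V) (auto simp: vc_count_def)

lemma signed_discrepancy_Nil: "signed_discrepancy f [] = 0"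
  by (simp add: signed_discrepancy_def vc_count_def)

lemma signed_discrepancy_Cons:
  "signed_discrepancy f (v # V) = (if f v > 0 then 1 else if f v < 0 then -1 else 0) + signed_discrepancy f V"
  by (simp add: signed_discrepancy_def vc_count_def)

lemma signed_discrepancy_uminus: "signed_discrepancy (\<lambda>x. - f x) V = - signed_discrepancy f V"
  by (induction V) (auto simp: signed_discrepancy_Nil signed_discrepancy_Cons)

lemma abs_signed_discrepancy_le: "\<bar>signed_discrepancy f V\<bar> \<le> int (length V)"
  using vc_count_pos_plus_neg_le[of f V] by (simp add: signed_discrepancy_def)

lemma signed_discrepancy_nowhere_zero:
  "\<forall>v\<in>set V. f v \<noteq> 0 \<Longrightarrow> signed_discrepancy f V = 2 * int (vc_count (\<lambda>v. f v > 0) V) - int (length V)"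
  using vc_count_pos_plus_neg_eq[of V f] by (simp add: signed_discrepancy_def)

lemma signed_discrepancy_perturbation:
  assumes "\<forall>v\<in>set V. f v \<noteq> 0 \<longrightarrow> \<bar>e * g v\<bar> < \<bar>f v\<bar>"
  shows "signed_discrepancy (\<lambda>x. f x + e * g x) V + signed_discrepancy (\<lambda>x. f x - e * g x) V
           = 2 * signed_discrepancy f V"
  using assms
  by (induction V) (auto simp: signed_discrepancy_Nil signed_discrepancy_Cons abs_less_iff)

lemma exists_inner_nonzero_on:
  fixes S :: "'a::euclidean_space set"
  assumes "finite S" "0 \<notin> S"
  obtains w where "\<forall>v\<in>S. inner w v \<noteq> 0"
proof -
  have "negligible (\<Union>v\<in>S. {w. v \<bullet> w = 0})"
    using assms by (intro negligible_Union) (auto intro: negligible_hyperplane)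
  then have "(\<Union>v\<in>S. {w. v \<bullet> w = 0}) \<noteq> UNIV"
    using open_not_negligible[of UNIV] by auto
  then obtain w where "\<forall>v\<in>S. v \<bullet> w \<noteq> 0"
    by blast
  then show thesis
    using that by (simp add: inner_commute)
qed

lemma exists_small_scalar:
  fixes f g :: "'a \<Rightarrow> real"
  assumes "finite S"
  obtains e where "e > 0" "\<forall>v\<in>S. f v \<noteq> 0 \<longrightarrow> \<bar>e * g v\<bar> < \<bar>f v\<bar>"
proof -
  have "\<forall>\<^sub>F e in at_right 0. f v \<noteq> 0 \<longrightarrow> \<bar>e * g v\<bar> < \<bar>f v\<bar>" for v
  proof -
    have "((\<lambda>e. \<bar>e * g v\<bar>) \<longlongrightarrow> 0) (at_right (0::real))"
      by (auto intro!: tendsto_eq_intros)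
    then show ?thesis
      by (cases "f v = 0") (auto dest: order_tendstoD(2)[where a = "\<bar>f v\<bar>"])
  qed
  then have "\<forall>\<^sub>F e in at_right 0. e > 0 \<and> (\<forall>v\<in>S. f v \<noteq> 0 \<longrightarrow> \<bar>e * g v\<bar> < \<bar>f v\<bar>)"
    using assms by (intro eventually_conj eventually_at_right_less eventually_ball_finite) auto
  then show thesis
    using that eventually_happens[of _ "at_right (0::real)"] by auto
qed

lemma exists_nowhere_zero_functional_ge:
  fixes V :: "(real^'n) list" and f :: "real^'n \<Rightarrow> real"
  assumes "0 \<notin> set V" "linear f"
  obtains h where "linear h" "\<forall>v\<in>set V. h v \<noteq> 0" "signed_discrepancy f V \<le> signed_discrepancy h V"
proof -
  obtain w :: "real^'n" where w: "\<forall>v\<in>set V. inner w v \<noteq> 0"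
    using exists_inner_nonzero_on[of "set V"] assms(1) by auto
  obtain e where e: "e > 0" "\<forall>v\<in>set V. f v \<noteq> 0 \<longrightarrow> \<bar>e * inner w v\<bar> < \<bar>f v\<bar>"
    using exists_small_scalar[of "set V" f "inner w"] by auto
  define h_pos where "h_pos = (\<lambda>x. f x + e * inner w x)"
  define h_neg where "h_neg = (\<lambda>x. f x - e * inner w x)"
  have "linear (\<lambda>x. e * inner w x)"
    by (intro bounded_linear.linear bounded_linear_const_mult bounded_linear_inner_right)
  then have "linear h_pos" "linear h_neg"
    unfolding h_pos_def h_neg_def using assms(2) by (auto intro: linear_compose_add linear_compose_sub)
  moreover have "\<forall>v\<in>set V. h_pos v \<noteq> 0" "\<forall>v\<in>set V. h_neg v \<noteq> 0"
    using e w unfolding h_pos_def h_neg_def by (fastforce simp: abs_less_iff)+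
  moreover have "signed_discrepancy h_pos V + signed_discrepancy h_neg V = 2 * signed_discrepancy f V"
    unfolding h_pos_def h_neg_def by (rule signed_discrepancy_perturbation[OF e(2)])
  ultimately show thesis
    using that by (cases "signed_discrepancy f V \<le> signed_discrepancy h_pos V") auto
qed

lemma nonzero_functional_coordinate: "nonzero_functional (\<lambda>x::real^'n. x $ i)"
proof -
  have "(\<lambda>x::real^'n. x $ i) \<noteq> (\<lambda>_. 0)"
    by (metis vec_component zero_neq_one)
  then show ?thesis
    by (simp add: nonzero_functional_def linearI)
qed

lemma open_halfspace_counts_finite_nonempty:
  "finite {vc_count (\<lambda>v. f v > 0) V | f. nonzero_functional (f :: real^'n \<Rightarrow> real)}"
  "{vc_count (\<lambda>v. f v > 0) V | f. nonzero_functional (f :: real^'n \<Rightarrow> real)} \<noteq> {}"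
  using vc_count_le_length nonzero_functional_coordinate
  by (auto intro: finite_subset[of _ "{..length V}"])

lemma vc_count_pos_le_max:
  "nonzero_functional f \<Longrightarrow> vc_count (\<lambda>v. f v > 0) V \<le> max_open_halfspace_count V"
  unfolding max_open_halfspace_count_def
  using open_halfspace_counts_finite_nonempty by (auto intro: Max_ge)

lemma max_open_halfspace_count_attained:
  obtains f where "nonzero_functional f" "vc_count (\<lambda>v. f v > 0) V = max_open_halfspace_count V"
  using Max_in[OF open_halfspace_counts_finite_nonempty[of V]]
  unfolding max_open_halfspace_count_def by auto

lemma max_open_halfspace_count_le_length: "max_open_halfspace_count V \<le> length V"
  by (metis max_open_halfspace_count_attained vc_count_le_length)

lemma dual_codegree_eq: "dual_codegree V = length V - max_open_halfspace_count V"
proof -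
  have "{vc_count (\<lambda>v. f v \<le> 0) V | f. nonzero_functional f}
          = (\<lambda>k. length V - k) ` {vc_count (\<lambda>v. f v > 0) V | f. nonzero_functional f}"
    by (auto simp: vc_count_nonpos)
  also have "Min \<dots> = length V - max_open_halfspace_count V"
  proof (rule Min_eqI)
    show "finite ((\<lambda>k. length V - k) ` {vc_count (\<lambda>v. f v > 0) V | f. nonzero_functional f})"
      by (intro finite_imageI open_halfspace_counts_finite_nonempty(1))
    obtain f where "nonzero_functional f" "vc_count (\<lambda>v. f v > 0) V = max_open_halfspace_count V"
      using max_open_halfspace_count_attained .
    then show "length V - max_open_halfspace_count V
        \<in> (\<lambda>k. length V - k) ` {vc_count (\<lambda>v. f v > 0) V | f. nonzero_functional f}"
      by force
  qed (auto intro: diff_le_mono2 vc_count_pos_le_max)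
  finally show ?thesis
    by (simp add: dual_codegree_def)
qed

lemma dual_degree_eq: "dual_degree V = int (max_open_halfspace_count V) - int (vc_rank V)"
  by (simp add: dual_degree_def max_open_halfspace_count_def)

lemma signed_discrepancy_le_max:
  assumes "0 \<notin> set V" "linear f"
  shows "signed_discrepancy f V \<le> 2 * int (max_open_halfspace_count V) - int (length V)"
proof -
  obtain h where h: "linear h" "\<forall>v\<in>set V. h v \<noteq> 0" "signed_discrepancy f V \<le> signed_discrepancy h V"
    using exists_nowhere_zero_functional_ge[OF assms] .
  have "vc_count (\<lambda>v. h v > 0) V \<le> max_open_halfspace_count V"
  proof (cases "h = (\<lambda>_. 0)")
    case True
    then show ?thesis by (simp add: vc_count_def)
  next
    case False
    then show ?thesis
      using h(1) by (intro vc_count_pos_le_max) (simp add: nonzero_functional_def)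
  qed
  then show ?thesis
    using h(3) signed_discrepancy_nowhere_zero[OF h(2)] by linarith
qed

lemma covector_discrepancy_eq:
  fixes V :: "(real^'n) list"
  assumes "0 \<notin> set V"
  shows "covector_discrepancy V = 2 * int (max_open_halfspace_count V) - int (length V)"
proof -
  let ?M = "2 * int (max_open_halfspace_count V) - int (length V)"
  have bound: "\<bar>signed_discrepancy f V\<bar> \<le> ?M" if "linear f" for f :: "real^'n \<Rightarrow> real"
    using signed_discrepancy_le_max[OF assms that]
      signed_discrepancy_le_max[OF assms linear_compose_neg[OF that]]
    by (simp add: signed_discrepancy_uminus)
  obtain f0 where f0: "nonzero_functional f0" "vc_count (\<lambda>v. f0 v > 0) V = max_open_halfspace_count V"
    using max_open_halfspace_count_attained .
  then have "\<bar>signed_discrepancy f0 V\<bar> = ?M"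
    using bound[of f0] vc_count_pos_plus_neg_le[of f0 V]
    by (simp add: nonzero_functional_def signed_discrepancy_def)
  moreover have "{\<bar>signed_discrepancy f V\<bar> | f :: real^'n \<Rightarrow> real. linear f} \<subseteq> {-int (length V)..?M}"
    using bound abs_signed_discrepancy_le by fastforce
  ultimately have "Max {\<bar>signed_discrepancy f V\<bar> | f :: real^'n \<Rightarrow> real. linear f} = ?M"
    using f0(1) unfolding nonzero_functional_def
    by (intro Max_eqI) (auto intro: finite_subset)
  then show ?thesis
    by (simp add: covector_discrepancy_def signed_discrepancy_def)
qed

theorem mainTheorem7:
  fixes V :: "(real^'n) list" and r :: nat and d :: int and \<delta> :: int
  assumes "0 \<notin> set V"
    and "vc_rank V = r"
    and "int (length V) = int r + d + 1"
    and "dual_degree V = \<delta>"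
  shows "covector_discrepancy V = int r - (d + 1 - 2 * \<delta>)
    \<and> int (vc_rank V) + dual_degree V = covector_discrepancy V + int (dual_codegree V)
    \<and> int (length V) = covector_discrepancy V + 2 * int (dual_codegree V)
    \<and> (\<forall>f. nonzero_functional f \<and> vc_count (\<lambda>v. f v \<le> 0) V = dual_codegree V
           \<longrightarrow> int (vc_count (\<lambda>v. f v > 0) V) = covector_discrepancy V + int (dual_codegree V))"
proof -
  let ?P = "max_open_halfspace_count V"
  have DD: "covector_discrepancy V = 2 * int ?P - int (length V)"
    using covector_discrepancy_eq[OF assms(1)] .
  have codeg: "int (dual_codegree V) = int (length V) - int ?P"
    using dual_codegree_eq[of V] max_open_halfspace_count_le_length[of V] by simp
  have deg: "dual_degree V = int ?P - int r"
    using dual_degree_eq[of V] assms(2) by simp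
  have "int (vc_count (\<lambda>v. f v > 0) V) = int ?P"
    if "vc_count (\<lambda>v. f v \<le> 0) V = dual_codegree V" for f :: "real^'n \<Rightarrow> real"
    using that codeg vc_count_nonpos[of f V] vc_count_le_length[of "\<lambda>v. f v > 0" V]
    by (simp add: of_nat_diff)
  then show ?thesis
    using DD codeg deg assms(2-4) by auto
qed

end
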